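(* Let $(G,\sigma)$ be a finite connected signed graph satisfying $CD^{\sigma}(K,N)$ for some $K\in\mathbb{R}$ and $N\in(0,\infty]$. Let $f:V\to\mathbb{R}$ be an eigenfunction of the signed Laplacian $\Delta^{\sigma}$ to a nonzero eigenvalue $\lambda^{\sigma}$, i.e. $-\Delta^\sigma f=\lambda^\sigma f$. Then for all $x\in V$ and all $\alpha>2-2K/\lambda^{\sigma}$, \[ |\nabla^{\sigma}f|^{2}(x)+\alpha\lambda^{\sigma} f^{2}(x)\leq\frac{(\alpha^{2}-\frac{4}{N})\lambda^{\sigma}+2K\alpha}{(\alpha-2)\lambda^{\sigma}+2K}\,\lambda^{\sigma}\cdot \max_{z\in V}f^{2}(z), \] with the convention $\frac1N=0$ if $N=\infty$.
   Context: $G=(V,E)$ is a finite simple connected graph; $x\sim y$ means $\{x,y\}\in E$; $d_x$ is the degree of $x$. A sign is a map $\sigma:E\to\{-1,+1\}$, $\sigma_{xy}:=\sigma(\{x,y\})$; $(G,\sigma)$ is a signed graph. The signed Laplacian is $\Delta^{\sigma}f(x)=\frac{1}{d_x}\sum_{y\sim x}(\sigma_{xy}f(y)-f(x))$, and $\Delta$ denotes the same operator with $\sigma\equiv+1$. For $f,g:V\to\mathbb{R}$: $\Gamma^{\sigma}(f,g)=\frac12\{\Delta(fg)-g\Delta^{\sigma}f-f\Delta^{\sigma}g\}$, $\Gamma_2^{\sigma}(f,g)=\frac12\{\Delta\Gamma^{\sigma}(f,g)-\Gamma^{\sigma}(g,\Delta^{\sigma}f)-\Gamma^{\sigma}(f,\Delta^{\sigma}g)\}$,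 $\Gamma^\sigma(f)=\Gamma^\sigma(f,f)$, $\Gamma_2^\sigma(f)=\Gamma_2^\sigma(f,f)$, and $|\nabla^{\sigma}f|^2(x):=2\Gamma^\sigma(f)(x)=\frac{1}{d_x}\sum_{y\sim x}(\sigma_{xy}f(y)-f(x))^2$. $(G,\sigma)$ satisfies $CD^{\sigma}(K,N)$ ($K\in\mathbb{R}$, $N\in(0,\infty]$) if $\Gamma_2^{\sigma}(f)(x)\ge\frac1N(\Delta^\sigma f)^2(x)+K\Gamma^\sigma(f)(x)$ for all $f:V\to\mathbb{R}$ and all $x\in V$ (with $\frac1N=0$ for $N=\infty$). *)

theory Defs
  imports "HOL-Analysis.Analysis" "HOL-Library.Extended_Real"
begin

definition signed_graph :: "'a set \<Rightarrow> ('a \<Rightarrow> 'a \<Rightarrow> bool) \<Rightarrow> ('a \<Rightarrow> 'a \<Rightarrow> real) \<Rightarrow> bool" where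
  "signed_graph V E sig \<longleftrightarrow>
     finite V \<and> V \<noteq> {} \<and>
     (\<forall>x y. E x y \<longrightarrow> x \<in> V \<and> y \<in> V) \<and>
     (\<forall>x y. E x y \<longrightarrow> E y x) \<and>
     (\<forall>x. \<not> E x x) \<and>
     (\<forall>x\<in>V. \<forall>y\<in>V. (x, y) \<in> ({(u, v). E u v})\<^sup>*) \<and>
     (\<forall>x y. E x y \<longrightarrow> sig x y = sig y x \<and> (sig x y = 1 \<or> sig x y = -1))"

definition nbrs :: "'a set \<Rightarrow> ('a \<Rightarrow> 'a \<Rightarrow> bool) \<Rightarrow> 'a \<Rightarrow> 'a set" where
  "nbrs V E x = {y \<in> V. E x y}"

definition deg :: "'a set \<Rightarrow> ('a \<Rightarrow> 'a \<Rightarrow> bool) \<Rightarrow> 'a \<Rightarrow> real" where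
  "deg V E x = real (card (nbrs V E x))"

definition slap :: "'a set \<Rightarrow> ('a \<Rightarrow> 'a \<Rightarrow> bool) \<Rightarrow> ('a \<Rightarrow> 'a \<Rightarrow> real) \<Rightarrow> ('a \<Rightarrow> real) \<Rightarrow> 'a \<Rightarrow> real" where
  "slap V E sig f x = (1 / deg V E x) * (\<Sum>y\<in>nbrs V E x. sig x y * f y - f x)"

definition lap :: "'a set \<Rightarrow> ('a \<Rightarrow> 'a \<Rightarrow> bool) \<Rightarrow> ('a \<Rightarrow> real) \<Rightarrow> 'a \<Rightarrow> real" where
  "lap V E f x = slap V E (\<lambda>_ _. 1) f x"

definition sGamma :: "'a set \<Rightarrow> ('a \<Rightarrow> 'a \<Rightarrow> bool) \<Rightarrow> ('a \<Rightarrow> 'a \<Rightarrow> real) \<Rightarrow> ('a \<Rightarrow> real) \<Rightarrow> ('a \<Rightarrow> real) \<Rightarrow> 'a \<Rightarrow> real" where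
  "sGamma V E sig f g x =
     (1/2) * (lap V E (\<lambda>z. f z * g z) x - g x * slap V E sig f x - f x * slap V E sig g x)"

definition sGamma2 :: "'a set \<Rightarrow> ('a \<Rightarrow> 'a \<Rightarrow> bool) \<Rightarrow> ('a \<Rightarrow> 'a \<Rightarrow> real) \<Rightarrow> ('a \<Rightarrow> real) \<Rightarrow> ('a \<Rightarrow> real) \<Rightarrow> 'a \<Rightarrow> real" where
  "sGamma2 V E sig f g x =
     (1/2) * (lap V E (sGamma V E sig f g) x
              - sGamma V E sig g (slap V E sig f) x
              - sGamma V E sig f (slap V E sig g) x)"

definition sgrad2 :: "'a set \<Rightarrow> ('a \<Rightarrow> 'a \<Rightarrow> bool) \<Rightarrow> ('a \<Rightarrow> 'a \<Rightarrow> real) \<Rightarrow> ('a \<Rightarrow> real) \<Rightarrow> 'a \<Rightarrow> real" where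
  "sgrad2 V E sig f x = (1 / deg V E x) * (\<Sum>y\<in>nbrs V E x. (sig x y * f y - f x)\<^sup>2)"

definition invN :: "ereal \<Rightarrow> real" where
  "invN N = (if N = \<infinity> then 0 else 1 / real_of_ereal N)"

definition CD_sig :: "'a set \<Rightarrow> ('a \<Rightarrow> 'a \<Rightarrow> bool) \<Rightarrow> ('a \<Rightarrow> 'a \<Rightarrow> real) \<Rightarrow> real \<Rightarrow> ereal \<Rightarrow> bool" where
  "CD_sig V E sig K N \<longleftrightarrow>
     (\<forall>f :: 'a \<Rightarrow> real. \<forall>x\<in>V.
        sGamma2 V E sig f f x \<ge> invN N * (slap V E sig f x)\<^sup>2 + K * sGamma V E sig f f x)"

end

theory Submission
  imports Defs
begin

text \<open>
  Summing \<open>deg \<cdot> \<Delta>\<close> over the finite vertex set gives zero. Applied to \<open>f\<^sup>2\<close> and to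
  \<open>\<Gamma>\<^sup>\<sigma>(f)\<close> for an eigenfunction this yields \<open>\<Sum> deg \<Gamma>\<^sup>\<sigma>(f) = \<lambda> \<Sum> deg f\<^sup>2\<close> and
  \<open>\<Sum> deg \<Gamma>\<^sub>2\<^sup>\<sigma>(f) = \<lambda>\<^sup>2 \<Sum> deg f\<^sup>2\<close>, so \<open>\<lambda> > 0\<close> and, integrating \<open>CD\<^sup>\<sigma>(K,N)\<close>, the
  Lichnerowicz bound \<open>K \<le> (1 - 1/N) \<lambda>\<close>.
  At a maximum point of \<open>F = |\<nabla>\<^sup>\<sigma>f|\<^sup>2 + \<alpha>\<lambda>f\<^sup>2 = 2\<Gamma>\<^sup>\<sigma>(f) + \<alpha>\<lambda>f\<^sup>2\<close> we have \<open>\<Delta>F \<le> 0\<close>.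
  Expanding \<open>\<Delta>F\<close> with \<open>\<Gamma>\<^sub>2\<^sup>\<sigma>(f) = \<Delta>\<Gamma>\<^sup>\<sigma>(f)/2 + \<lambda>\<Gamma>\<^sup>\<sigma>(f)\<close> and \<open>\<Delta>(f\<^sup>2) = 2\<Gamma>\<^sup>\<sigma>(f) - 2\<lambda>f\<^sup>2\<close>
  and applying \<open>CD\<^sup>\<sigma>(K,N)\<close> there gives
  \<open>((\<alpha>-2)\<lambda>+2K) F \<le> ((\<alpha>\<^sup>2-4/N)\<lambda>+2K\<alpha>) \<lambda> f\<^sup>2\<close> at that point; the Lichnerowicz bound
  makes the right-hand coefficient nonnegative, so \<open>f\<^sup>2\<close> may be replaced by its maximum.
\<close>

lemma finite_nbrs: "signed_graph V E sig \<Longrightarrow> finite (nbrs V E x)"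
  unfolding signed_graph_def nbrs_def by auto

lemma invN_nonneg: "N > 0 \<Longrightarrow> invN N \<ge> 0"
  by (cases N) (auto simp: invN_def)

lemma lap_eq_sum: "lap V E g x = (1 / deg V E x) * (\<Sum>y\<in>nbrs V E x. g y - g x)"
  unfolding lap_def slap_def by simp

lemma slap_cong:
  assumes "x \<in> V" "\<forall>z\<in>V. g z = h z"
  shows "slap V E sig g x = slap V E sig h x"
  unfolding slap_def using assms by (auto intro!: sum.cong simp: nbrs_def)

lemma lap_cong:
  assumes "x \<in> V" "\<forall>z\<in>V. g z = h z"
  shows "lap V E g x = lap V E h x"
  unfolding lap_def using slap_cong[OF assms] by simp

lemma sGamma_cong:
  assumes "x \<in> V" "\<forall>z\<in>V. g z = h z"
  shows "sGamma V E sig f g x = sGamma V E sig f h x"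
proof -
  have "lap V E (\<lambda>z. f z * g z) x = lap V E (\<lambda>z. f z * h z) x"
    by (rule lap_cong) (use assms in auto)
  then show ?thesis
    unfolding sGamma_def using slap_cong[OF assms, of E sig] assms by simp
qed

lemma slap_scale: "slap V E sig (\<lambda>z. c * g z) x = c * slap V E sig g x"
  unfolding slap_def by (simp add: sum_distrib_left algebra_simps)

lemma lap_linear: "lap V E (\<lambda>z. a * g z + b * h z) x = a * lap V E g x + b * lap V E h x"
proof -
  have "(\<Sum>y\<in>nbrs V E x. (a * g y + b * h y) - (a * g x + b * h x))
     = (\<Sum>y\<in>nbrs V E x. a * (g y - g x) + b * (h y - h x))"
    by (simp add: algebra_simps)
  also have "\<dots> = a * (\<Sum>y\<in>nbrs V E x. g y - g x) + b * (\<Sum>y\<in>nbrs V E x. h y - h x)"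
    by (simp only: sum.distrib sum_distrib_left)
  finally show ?thesis unfolding lap_eq_sum by (simp add: algebra_simps)
qed

lemma sGamma_scale: "sGamma V E sig f (\<lambda>z. c * f z) x = c * sGamma V E sig f f x"
proof -
  have "lap V E (\<lambda>z. f z * (c * f z)) x = c * lap V E (\<lambda>z. f z * f z) x"
    using slap_scale[of V E "\<lambda>_ _. 1" c "\<lambda>z. f z * f z" x] unfolding lap_def
    by (simp add: ac_simps)
  then show ?thesis unfolding sGamma_def slap_scale by (simp add: algebra_simps)
qed

lemma lap_nonpos_at_max:
  assumes "x \<in> V" "\<forall>y\<in>V. F y \<le> F x"
  shows "lap V E F x \<le> 0"
proof -
  have "(\<Sum>y\<in>nbrs V E x. F y - F x) \<le> 0"
    by (rule sum_nonpos) (use assms in \<open>auto simp: nbrs_def\<close>)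
  then show ?thesis
    unfolding lap_eq_sum by (simp add: deg_def divide_nonpos_nonneg)
qed

text \<open>The identity uses \<open>\<sigma>\<^sub>x\<^sub>y\<^sup>2 = 1\<close> on edges.\<close>

lemma sgrad2_eq_sGamma:
  assumes "signed_graph V E sig"
  shows "sgrad2 V E sig f x = 2 * sGamma V E sig f f x"
proof -
  have sq: "(sig x y * f y - f x)\<^sup>2 = (f y * f y - f x * f x) - 2 * f x * (sig x y * f y - f x)"
    if "y \<in> nbrs V E x" for y
  proof -
    have "sig x y = 1 \<or> sig x y = -1"
      using assms that unfolding signed_graph_def nbrs_def by auto
    then show ?thesis by (auto simp: power2_eq_square algebra_simps)
  qed
  have "sgrad2 V E sig f x = (1 / deg V E x) *
      ((\<Sum>y\<in>nbrs V E x. f y * f y - f x * f x) - 2 * f x * (\<Sum>y\<in>nbrs V E x. sig x y * f y - f x))"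
    unfolding sgrad2_def using sq
    by (simp add: sum_subtractf sum_distrib_left[symmetric] cong: sum.cong)
  then show ?thesis
    unfolding sGamma_def lap_eq_sum by (simp add: slap_def algebra_simps)
qed

lemma sGamma_nonneg:
  assumes "signed_graph V E sig"
  shows "sGamma V E sig f f x \<ge> 0"
proof -
  have "sgrad2 V E sig f x \<ge> 0"
    unfolding sgrad2_def deg_def by (intro mult_nonneg_nonneg sum_nonneg) auto
  then show ?thesis using sgrad2_eq_sGamma[OF assms] by simp
qed

lemma sum_deg_lap_eq_0:
  assumes "signed_graph V E sig"
  shows "(\<Sum>x\<in>V. deg V E x * lap V E g x) = 0"
proof -
  have fin: "finite V" and sym: "\<And>x y. E x y = E y x"
    using assms unfolding signed_graph_def by blast+
  have deg_lap: "deg V E x * lap V E g x = (\<Sum>y\<in>nbrs V E x. g y - g x)" for x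
  proof (cases "deg V E x = 0")
    case True
    then have "nbrs V E x = {}" using finite_nbrs[OF assms] unfolding deg_def by auto
    then show ?thesis by (simp add: lap_eq_sum)
  qed (simp add: lap_eq_sum)
  have "(\<Sum>x\<in>V. deg V E x * lap V E g x) = (\<Sum>x\<in>V. \<Sum>y\<in>V. if E x y then g y - g x else 0)"
    unfolding deg_lap nbrs_def by (simp add: sum.inter_filter[OF fin])
  also have "\<dots> = (\<Sum>x\<in>V. \<Sum>y\<in>V. if E x y then g y else 0)
      - (\<Sum>x\<in>V. \<Sum>y\<in>V. if E x y then g x else 0)"
    by (simp add: sum_subtractf[symmetric] if_distrib cong: if_cong)
  also have "(\<Sum>x\<in>V. \<Sum>y\<in>V. if E x y then g y else 0) = (\<Sum>y\<in>V. \<Sum>x\<in>V. if E y x then g y else 0)"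
    by (subst sum.swap) (simp add: sym)
  finally show ?thesis by simp
qed

locale signed_eigenfunction =
  fixes V :: "'a set" and E :: "'a \<Rightarrow> 'a \<Rightarrow> bool" and sig :: "'a \<Rightarrow> 'a \<Rightarrow> real"
    and f :: "'a \<Rightarrow> real" and lam :: real
  assumes graph: "signed_graph V E sig"
    and eigen: "\<forall>z\<in>V. - slap V E sig f z = lam * f z"
begin

lemma slap_eigen: "z \<in> V \<Longrightarrow> slap V E sig f z = - lam * f z"
  using eigen by auto

lemma sGamma2_eigen:
  assumes "z \<in> V"
  shows "sGamma2 V E sig f f z = 1/2 * lap V E (sGamma V E sig f f) z + lam * sGamma V E sig f f z"
proof -
  have "sGamma V E sig f (slap V E sig f) z = sGamma V E sig f (\<lambda>w. - lam * f w) z"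
    by (rule sGamma_cong) (use assms slap_eigen in auto)
  then show ?thesis
    unfolding sGamma2_def sGamma_scale by (simp add: algebra_simps)
qed

lemma lap_square_eigen:
  assumes "z \<in> V"
  shows "lap V E (\<lambda>w. (f w)\<^sup>2) z = 2 * sGamma V E sig f f z - 2 * lam * (f z)\<^sup>2"
  unfolding sGamma_def using slap_eigen[OF assms] by (simp add: power2_eq_square algebra_simps)

lemma CD_sig_eigen:
  assumes "CD_sig V E sig K N" "z \<in> V"
  shows "sGamma2 V E sig f f z \<ge> invN N * lam\<^sup>2 * (f z)\<^sup>2 + K * sGamma V E sig f f z"
proof -
  have "sGamma2 V E sig f f z \<ge> invN N * (slap V E sig f z)\<^sup>2 + K * sGamma V E sig f f z"
    using assms unfolding CD_sig_def by blast
  then show ?thesis using slap_eigen[OF assms(2)] by (simp add: power_mult_distrib)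
qed

lemma sum_deg_sGamma_eigen:
  "(\<Sum>z\<in>V. deg V E z * sGamma V E sig f f z) = lam * (\<Sum>z\<in>V. deg V E z * (f z)\<^sup>2)"
proof -
  have "0 = (\<Sum>z\<in>V. deg V E z * lap V E (\<lambda>w. (f w)\<^sup>2) z)"
    using sum_deg_lap_eq_0[OF graph] by simp
  also have "\<dots> = 2 * (\<Sum>z\<in>V. deg V E z * sGamma V E sig f f z)
      - 2 * lam * (\<Sum>z\<in>V. deg V E z * (f z)\<^sup>2)"
    by (simp add: lap_square_eigen algebra_simps sum_subtractf sum_distrib_left)
  finally show ?thesis by simp
qed

lemma sum_deg_sGamma2_eigen:
  "(\<Sum>z\<in>V. deg V E z * sGamma2 V E sig f f z) = lam\<^sup>2 * (\<Sum>z\<in>V. deg V E z * (f z)\<^sup>2)"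
proof -
  have "(\<Sum>z\<in>V. deg V E z * sGamma2 V E sig f f z)
      = 1/2 * (\<Sum>z\<in>V. deg V E z * lap V E (sGamma V E sig f f) z)
        + lam * (\<Sum>z\<in>V. deg V E z * sGamma V E sig f f z)"
    by (simp add: sGamma2_eigen algebra_simps sum.distrib sum_distrib_left)
  then show ?thesis
    unfolding sum_deg_lap_eq_0[OF graph] sum_deg_sGamma_eigen by (simp add: power2_eq_square)
qed

text \<open>A vertex of degree \<open>0\<close> has \<open>\<Delta>\<^sup>\<sigma>f = 0\<close> (as \<open>1/0 = 0\<close>), so \<open>f\<close> vanishes there.\<close>

lemma sum_deg_square_pos:
  assumes "\<exists>z\<in>V. f z \<noteq> 0" "lam \<noteq> 0"
  shows "(\<Sum>z\<in>V. deg V E z * (f z)\<^sup>2) > 0"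
proof -
  obtain z where z: "z \<in> V" "f z \<noteq> 0" using assms(1) by auto
  have "deg V E z \<noteq> 0"
  proof
    assume "deg V E z = 0"
    then have "slap V E sig f z = 0" by (simp add: slap_def)
    then show False using slap_eigen[OF z(1)] z(2) assms(2) by simp
  qed
  then have "deg V E z * (f z)\<^sup>2 > 0" using z(2) by (simp add: deg_def)
  moreover have "finite V" using graph unfolding signed_graph_def by auto
  ultimately show ?thesis
    by (intro sum_pos2[OF _ z(1)]) (auto simp: deg_def)
qed

lemma eigenvalue_pos:
  assumes "\<exists>z\<in>V. f z \<noteq> 0" "lam \<noteq> 0"
  shows "lam > 0"
proof -
  have "lam * (\<Sum>z\<in>V. deg V E z * (f z)\<^sup>2) \<ge> 0"
    unfolding sum_deg_sGamma_eigen[symmetric]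
    by (intro sum_nonneg mult_nonneg_nonneg) (auto simp: deg_def sGamma_nonneg[OF graph])
  then show ?thesis
    using sum_deg_square_pos[OF assms] assms(2) by (simp add: zero_le_mult_iff)
qed

lemma lichnerowicz_bound:
  assumes "CD_sig V E sig K N" "\<exists>z\<in>V. f z \<noteq> 0" "lam \<noteq> 0"
  shows "K \<le> lam * (1 - invN N)"
proof -
  define S where "S = (\<Sum>z\<in>V. deg V E z * (f z)\<^sup>2)"
  have "(invN N * lam + K) * (lam * S)
      = invN N * lam\<^sup>2 * S + K * (\<Sum>z\<in>V. deg V E z * sGamma V E sig f f z)"
    unfolding sum_deg_sGamma_eigen S_def[symmetric] by (simp add: power2_eq_square algebra_simps)
  also have "\<dots> = (\<Sum>z\<in>V. deg V E z * (invN N * lam\<^sup>2 * (f z)\<^sup>2 + K * sGamma V E sig f f z))"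
    unfolding S_def distrib_left sum.distrib by (simp add: sum_distrib_left ac_simps)
  also have "\<dots> \<le> (\<Sum>z\<in>V. deg V E z * sGamma2 V E sig f f z)"
    by (intro sum_mono mult_left_mono CD_sig_eigen[OF assms(1)]) (auto simp: deg_def)
  also have "\<dots> = lam * (lam * S)"
    unfolding sum_deg_sGamma2_eigen S_def by (simp add: power2_eq_square)
  finally have "(invN N * lam + K) * (lam * S) \<le> lam * (lam * S)" .
  moreover have "lam * S > 0"
    using eigenvalue_pos[OF assms(2,3)] sum_deg_square_pos[OF assms(2,3)] by (simp add: S_def)
  ultimately have "invN N * lam + K \<le> lam"
    by (simp add: mult_le_cancel_right_pos)
  then show ?thesis by (simp add: algebra_simps)
qed

lemma gradient_estimate_at:
  assumes "CD_sig V E sig K N" "x \<in> V"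
    and "lap V E (\<lambda>z. sgrad2 V E sig f z + \<alpha> * lam * (f z)\<^sup>2) x \<le> 0"
  shows "((\<alpha> - 2) * lam + 2 * K) * (sgrad2 V E sig f x + \<alpha> * lam * (f x)\<^sup>2)
    \<le> ((\<alpha>\<^sup>2 - 4 * invN N) * lam + 2 * K * \<alpha>) * lam * (f x)\<^sup>2"
proof -
  define G where "G = sGamma V E sig f f"
  have "lap V E (\<lambda>z. sgrad2 V E sig f z + \<alpha> * lam * (f z)\<^sup>2) x
      = 2 * lap V E G x + \<alpha> * lam * lap V E (\<lambda>z. (f z)\<^sup>2) x"
    unfolding sgrad2_eq_sGamma[OF graph] G_def by (rule lap_linear)
  also have "\<dots> = 4 * sGamma2 V E sig f f x - 4 * lam * G x
      + \<alpha> * lam * (2 * G x - 2 * lam * (f x)\<^sup>2)"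
    using sGamma2_eigen[OF assms(2)] lap_square_eigen[OF assms(2)] by (simp add: G_def)
  finally have "4 * (invN N * lam\<^sup>2 * (f x)\<^sup>2 + K * G x) - 4 * lam * G x
      + \<alpha> * lam * (2 * G x - 2 * lam * (f x)\<^sup>2) \<le> 0"
    using assms(3) CD_sig_eigen[OF assms(1,2)] by (simp add: G_def)
  then show ?thesis
    unfolding sgrad2_eq_sGamma[OF graph] G_def[symmetric]
    by (simp add: power2_eq_square algebra_simps)
qed

end

lemma gradient_estimate_coeff_nonneg:
  fixes lam K n \<alpha> :: real
  assumes "lam > 0" "n \<ge> 0" "K \<le> lam * (1 - n)" "\<alpha> > 2 - 2 * K / lam"
  shows "(\<alpha>\<^sup>2 - 4 * n) * lam + 2 * K * \<alpha> \<ge> 0"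
proof -
  define t where "t = K / lam"
  define s where "s = \<alpha> - 2 + 2 * t"
  have K: "K = t * lam" using assms(1) by (simp add: t_def)
  have "t \<le> 1 - n" using assms(1,3) by (simp add: K mult.commute)
  moreover have "s > 0" using assms(4) by (simp add: s_def t_def)
  moreover have "\<alpha>\<^sup>2 - 4 * n + 2 * t * \<alpha> = 4 * (1 - t - n) + s * (4 - 2 * t) + s\<^sup>2"
    by (simp add: s_def power2_eq_square algebra_simps)
  ultimately have "\<alpha>\<^sup>2 - 4 * n + 2 * t * \<alpha> \<ge> 0"
    using assms(2) by (smt (verit) mult_pos_pos zero_le_power2)
  moreover have "(\<alpha>\<^sup>2 - 4 * n) * lam + 2 * K * \<alpha> = lam * (\<alpha>\<^sup>2 - 4 * n + 2 * t * \<alpha>)"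
    by (simp add: K algebra_simps)
  ultimately show ?thesis
    using assms(1) by simp
qed

theorem theorem3p1:
  fixes V :: "'a set" and E :: "'a \<Rightarrow> 'a \<Rightarrow> bool" and sig :: "'a \<Rightarrow> 'a \<Rightarrow> real"
    and K :: real and N :: ereal and f :: "'a \<Rightarrow> real" and lam :: real
    and x :: 'a and \<alpha> :: real
  assumes "signed_graph V E sig"
    and "N > 0"
    and "CD_sig V E sig K N"
    and "\<exists>z\<in>V. f z \<noteq> 0"
    and "\<forall>z\<in>V. - slap V E sig f z = lam * f z"
    and "lam \<noteq> 0"
    and "x \<in> V"
    and "\<alpha> > 2 - 2 * K / lam"
  shows "sgrad2 V E sig f x + \<alpha> * lam * (f x)\<^sup>2
     \<le> ((\<alpha>\<^sup>2 - 4 * invN N) * lam + 2 * K * \<alpha>) / ((\<alpha> - 2) * lam + 2 * K) * lam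
        * Max ((\<lambda>z. (f z)\<^sup>2) ` V)"
proof -
  interpret signed_eigenfunction V E sig f lam
    using assms(1,5) by unfold_locales
  define F where "F z = sgrad2 V E sig f z + \<alpha> * lam * (f z)\<^sup>2" for z
  define A where "A = (\<alpha>\<^sup>2 - 4 * invN N) * lam + 2 * K * \<alpha>"
  define c where "c = (\<alpha> - 2) * lam + 2 * K"
  have fin: "finite V" and ne: "V \<noteq> {}"
    using assms(1) unfolding signed_graph_def by auto
  have "Max (F ` V) \<in> F ` V"
    using fin ne by simp
  then obtain x0 where x0: "x0 \<in> V" "F x0 = Max (F ` V)"
    by (metis imageE)
  have F_max: "\<forall>y\<in>V. F y \<le> F x0"
    using fin x0(2) by simp
  have lam: "lam > 0"
    using eigenvalue_pos assms(4,6) .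
  have "c > 0"
    using assms(8) lam by (simp add: c_def field_simps)
  moreover have "c * F x0 \<le> A * lam * (f x0)\<^sup>2"
    using gradient_estimate_at[OF assms(3) x0(1)] lap_nonpos_at_max[OF x0(1) F_max]
    by (simp add: A_def c_def F_def[abs_def])
  ultimately have "F x0 \<le> A / c * lam * (f x0)\<^sup>2"
    by (simp add: pos_le_divide_eq ac_simps)
  moreover have "A / c * lam \<ge> 0"
    using gradient_estimate_coeff_nonneg[OF lam invN_nonneg[OF assms(2)]
        lichnerowicz_bound[OF assms(3,4,6)] assms(8)] \<open>c > 0\<close> lam
    by (simp add: A_def)
  moreover have "(f x0)\<^sup>2 \<le> Max ((\<lambda>z. (f z)\<^sup>2) ` V)"
    using fin x0(1) by simp
  ultimately have "F x0 \<le> A / c * lam * Max ((\<lambda>z. (f z)\<^sup>2) ` V)"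
    by (meson mult_left_mono order_trans)
  then show ?thesis
    using F_max assms(7) unfolding F_def A_def c_def by fastforce
qed

end
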